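(* Fix a constant $r<\frac{1}{93}$ and let $n,k$ be positive integers with $k=rn$ and $k\ge 2$. Then $$\overline{\mathrm{dist}}_F(\mathcal{S}^{n,k},\mathcal{S}^n_+)>\frac{\sqrt{r-93r^2}}{\sqrt{162r+3}}.$$
   Context: $\mathcal{S}^n_+$ denotes the cone of $n\times n$ real symmetric positive semidefinite (PSD) matrices. For integers $2\le k\le n$, the $k$-PSD closure $\mathcal{S}^{n,k}$ is the set of all $n\times n$ real symmetric matrices all of whose $k\times k$ principal submatrices are PSD. For a matrix $M$, $\mathrm{dist}_F(M,\mathcal{S}^n_+)=\inf_{N\in\mathcal{S}^n_+}\|M-N\|_F$, where $\|\cdot\|_F$ is the Frobenius norm. For a set $\mathcal{K}$ of $n\times n$ matrices, $\overline{\mathrm{dist}}_F(\mathcal{K},\mathcal{S}^n_+)=\sup_{M\in\mathcal{K},\ \|M\|_F=1}\mathrm{dist}_F(M,\mathcal{S}^n_+)$. *)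

theory Defs
  imports "HOL-Analysis.Analysis"
begin

text \<open>Real symmetric n x n matrices are modelled as real^'n^'n with the finite index type 'n, n = CARD('n).\<close>

definition sym_mat :: "real^'n^'n \<Rightarrow> bool" where
  "sym_mat A \<longleftrightarrow> transpose A = A"

definition psd :: "real^'n^'n \<Rightarrow> bool" where
  "psd A \<longleftrightarrow> sym_mat A \<and> (\<forall>x::real^'n. 0 \<le> x \<bullet> (A *v x))"

definition principal_psd :: "real^'n^'n \<Rightarrow> 'n set \<Rightarrow> bool" where
  "principal_psd A S \<longleftrightarrow>
     (\<forall>x::'n \<Rightarrow> real. 0 \<le> (\<Sum>i\<in>S. \<Sum>j\<in>S. x i * A$i$j * x j))"

definition kpsd_closure :: "nat \<Rightarrow> (real^'n^'n) set" where
  "kpsd_closure k = {A. sym_mat A \<and> (\<forall>S. card S = k \<longrightarrow> principal_psd A S)}"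

definition frob :: "real^'n^'n \<Rightarrow> real" where
  "frob A = sqrt (\<Sum>i\<in>UNIV. \<Sum>j\<in>UNIV. (A$i$j)^2)"

definition distF_psd :: "real^'n^'n \<Rightarrow> real" where
  "distF_psd M = Inf {frob (M - N) | N. psd N}"

definition distF_bar :: "(real^'n^'n) set \<Rightarrow> real" where
  "distF_bar K = Sup {distF_psd M | M. M \<in> K \<and> frob M = 1}"

end

theory Submission
  imports Defs "HOL-Probability.Hoeffding"
begin

text \<open>Let \<open>Q\<close> be an \<open>n \<times> k\<close> sign matrix, \<open>Y = Q Q\<^sup>T\<close> and \<open>G = a I - Y\<close>. A principal submatrix
  \<open>G\<^sub>T = a I - Q\<^sub>T Q\<^sub>T\<^sup>T\<close> with \<open>|T| = k\<close> is PSD as soon as the \<open>k \<times> k\<close> row block \<open>Q\<^sub>T\<close> has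
  operator norm at most \<open>\<surd>a\<close>. Testing the bilinear form of \<open>Q\<^sub>T\<close> on a \<open>1/10\<close>-net of the unit
  ball, a Hoeffding bound for Rademacher sums and a union bound over the \<open>n choose k\<close> row sets
  show that some \<open>Q\<close> achieves \<open>a = 25/8 (14 k + n/93 + 1)\<close>, which is about \<open>n/2\<close> for \<open>k < n/93\<close>;
  so \<open>G\<close> lies in the \<open>k\<close>-PSD closure.

  On the other hand \<open>Y\<close> is PSD, so \<open>\<langle>N, Y\<rangle> \<ge> 0\<close> for every PSD \<open>N\<close>, while
  \<open>\<langle>G, Y\<rangle> = a n k - \<parallel>Y\<parallel>\<^sup>2 < 0\<close> because \<open>\<parallel>Y\<parallel>\<^sup>2 \<ge> k n\<^sup>2\<close>. By Cauchy-Schwarz the normalised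
  matrix \<open>G / \<parallel>G\<parallel>\<close> is at Frobenius distance at least \<open>- \<langle>G, Y\<rangle> / (\<parallel>G\<parallel> \<parallel>Y\<parallel>)\<close> from the PSD cone,
  and an elementary estimate bounds this ratio below by \<open>\<surd>(r - 93 r\<^sup>2) / \<surd>(162 r + 3)\<close>.\<close>

section \<open>Tail bound for Rademacher sums\<close>

lemma exp_add_exp_minus_le: "exp (t::real) + exp (-t) \<le> 2 * exp (t\<^sup>2 / 2)"
proof -
  define u where "u = \<bar>t\<bar>"
  define h where "h = 2 * u"
  have "0 \<le> h"
    by (simp add: h_def u_def)
  \<comment> \<open>Hoeffding's lemma for a fair coin with values \<open>0\<close> and \<open>h\<close>\<close>
  from Hoeffdings_lemma_aux[OF this, of "1/2"]
  have "ln (1 + (1/2) * (exp h - 1)) \<le> h / 2 + h\<^sup>2 / 8"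
    by simp
  moreover have "1 + (1/2) * (exp h - 1) = (1 + exp h) / 2"
    by (simp add: field_simps)
  ultimately have "ln ((1 + exp h) / 2) \<le> h / 2 + h\<^sup>2 / 8"
    by (simp only:)
  then have "(1 + exp h) / 2 \<le> exp (h / 2 + h\<^sup>2 / 8)"
    by (metis exp_le_cancel_iff exp_ln add_pos_pos exp_gt_zero zero_less_one half_gt_zero)
  moreover have "h / 2 + h\<^sup>2 / 8 = u + t\<^sup>2 / 2" "exp h = exp u * exp u"
    by (simp_all add: h_def u_def power2_eq_square flip: exp_add)
  ultimately have "(1 + exp u * exp u) / 2 \<le> exp u * exp (t\<^sup>2 / 2)"
    by (simp add: exp_add)
  then have "(1 + exp u * exp u) * exp (-u) \<le> 2 * exp (t\<^sup>2 / 2)"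
    by (simp add: field_simps exp_minus)
  then have "exp u + exp (-u) \<le> 2 * exp (t\<^sup>2 / 2)"
    by (simp add: exp_minus field_simps)
  then show ?thesis
    by (cases "t \<ge> 0") (auto simp: u_def)
qed

lemma card_sign_vectors_sum_ge:
  fixes A :: "'p set" and w :: "'p \<Rightarrow> real"
  assumes fin: "finite A" and w2: "(\<Sum>p\<in>A. (w p)\<^sup>2) \<le> 1" and s0: "0 \<le> s"
  shows "real (card {Q \<in> PiE A (\<lambda>_. {-1, 1}). s \<le> (\<Sum>p\<in>A. w p * Q p)})
           \<le> 2 ^ card A * exp (- s\<^sup>2 / 2)"
proof -
  define \<Omega> where "\<Omega> = PiE A (\<lambda>_. {-1, 1::real})"
  have "finite \<Omega>"
    unfolding \<Omega>_def using fin by (simp add: finite_PiE)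
  then have "real (card {Q \<in> \<Omega>. s \<le> (\<Sum>p\<in>A. w p * Q p)})
        = (\<Sum>Q\<in>\<Omega>. if s \<le> (\<Sum>p\<in>A. w p * Q p) then 1 else 0)"
    by (simp add: sum.If_cases Int_def)
  \<comment> \<open>Chernoff's bound with exponent \<open>s\<close>\<close>
  also have "\<dots> \<le> (\<Sum>Q\<in>\<Omega>. exp (s * (\<Sum>p\<in>A. w p * Q p) - s\<^sup>2))"
  proof (rule sum_mono)
    fix Q
    have "0 \<le> s * (\<Sum>p\<in>A. w p * Q p) - s\<^sup>2" if "s \<le> (\<Sum>p\<in>A. w p * Q p)"
      using mult_left_mono[OF that s0] by (simp add: power2_eq_square)
    then show "(if s \<le> (\<Sum>p\<in>A. w p * Q p) then 1 else 0)
        \<le> exp (s * (\<Sum>p\<in>A. w p * Q p) - s\<^sup>2)"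
      by auto
  qed
  also have "\<dots> = exp (- s\<^sup>2) * (\<Sum>Q\<in>\<Omega>. \<Prod>p\<in>A. exp (s * w p * Q p))"
  proof -
    have "exp (s * (\<Sum>p\<in>A. w p * Q p)) = (\<Prod>p\<in>A. exp (s * w p * Q p))" for Q
      using fin by (simp add: exp_sum[symmetric] sum_distrib_left mult.assoc)
    then show ?thesis
      by (simp add: exp_diff exp_minus sum_distrib_left divide_inverse mult.commute)
  qed
  also have "(\<Sum>Q\<in>\<Omega>. \<Prod>p\<in>A. exp (s * w p * Q p)) = (\<Prod>p\<in>A. exp (s * w p) + exp (- (s * w p)))"
    unfolding \<Omega>_def
    using prod_sum_PiE[OF fin, of "\<lambda>_. {-1, 1::real}" "\<lambda>p b. exp (s * w p * b)"]
    by (simp add: add.commute)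
  also have "\<dots> \<le> (\<Prod>p\<in>A. 2 * exp ((s * w p)\<^sup>2 / 2))"
    by (rule prod_mono) (simp add: exp_add_exp_minus_le add_nonneg_nonneg)
  also have "\<dots> = 2 ^ card A * exp (s\<^sup>2 / 2 * (\<Sum>p\<in>A. (w p)\<^sup>2))"
    using fin by (simp add: prod.distrib exp_sum[symmetric] sum_distrib_left power_mult_distrib)
  also have "exp (- s\<^sup>2) * \<dots> \<le> exp (- s\<^sup>2) * (2 ^ card A * exp (s\<^sup>2 / 2))"
    using w2 by (intro mult_left_mono) (auto intro!: mult_right_le_one_le simp: mult_left_le)
  also have "\<dots> = 2 ^ card A * exp (- s\<^sup>2 / 2)"
    by (simp add: exp_add[symmetric] field_simps)
  finally show ?thesis
    unfolding \<Omega>_def by simp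
qed

section \<open>A net of the unit ball\<close>

definition round_toward_zero :: "real \<Rightarrow> int" where
  "round_toward_zero v = (if 0 \<le> v then \<lfloor>v\<rfloor> else - \<lfloor>- v\<rfloor>)"

lemma abs_round_toward_zero_le: "\<bar>real_of_int (round_toward_zero v)\<bar> \<le> \<bar>v\<bar>"
proof (cases "0 \<le> v")
  case False
  then have "0 \<le> \<lfloor>- v\<rfloor>" "real_of_int \<lfloor>- v\<rfloor> \<le> - v"
    by simp_all
  with False show ?thesis
    unfolding round_toward_zero_def by simp
qed (simp add: round_toward_zero_def)

lemma abs_diff_round_toward_zero_less: "\<bar>v - real_of_int (round_toward_zero v)\<bar> < 1"
  unfolding round_toward_zero_def
  by (cases "0 \<le> v") (auto simp: abs_if, linarith+)

text \<open>A \<open>1/10\<close>-net of the unit ball of \<open>\<real>\<^sup>I\<close>: the points \<open>m / (10 \<surd>|I|)\<close> of the ball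
  with \<open>m\<close> integral and \<open>\<parallel>m\<parallel>\<^sub>1 \<le> 10 |I|\<close>.\<close>

definition unit_ball_net :: "'a set \<Rightarrow> ('a \<Rightarrow> real) set" where
  "unit_ball_net I = {y. (\<exists>m \<in> PiE I (\<lambda>_. {- int (10 * card I)..int (10 * card I)}).
       (\<Sum>i\<in>I. \<bar>m i\<bar>) \<le> int (10 * card I) \<and> y = (\<lambda>i. real_of_int (m i) / (10 * sqrt (card I))))
     \<and> (\<Sum>i\<in>I. (y i)\<^sup>2) \<le> 1}"

lemma unit_ball_net_norm_le: "y \<in> unit_ball_net I \<Longrightarrow> (\<Sum>i\<in>I. (y i)\<^sup>2) \<le> 1"
  unfolding unit_ball_net_def by auto

lemma sum_exp_neg_abs_div_10_le:
  "(\<Sum>j\<in>{- int R..int R}. exp (- \<bar>real_of_int j\<bar> / 10)) \<le> 21 - 20 * exp (- real R / 10)"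
proof (induction R)
  case (Suc R)
  have "{- int (Suc R)..int (Suc R)} = insert (int (Suc R)) (insert (- int (Suc R)) {- int R..int R})"
    by auto
  then have "(\<Sum>j\<in>{- int (Suc R)..int (Suc R)}. exp (- \<bar>real_of_int j\<bar> / 10))
      = 2 * exp (- real (Suc R) / 10) + (\<Sum>j\<in>{- int R..int R}. exp (- \<bar>real_of_int j\<bar> / 10))"
    by (simp add: field_simps)
  also have "\<dots> \<le> 2 * exp (- real (Suc R) / 10) + 21 - 20 * exp (1/10) * exp (- real (Suc R) / 10)"
    using Suc.IH by (simp add: field_simps flip: exp_add)
  also have "\<dots> \<le> 21 - 20 * exp (- real (Suc R) / 10)"
    using exp_ge_add_one_self[of "1/10 :: real"]
    by (simp add: algebra_simps mult_right_mono)
  finally show ?case .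
qed simp

lemma indicator_l1_ball_le_exp:
  fixes m :: "'a \<Rightarrow> int"
  assumes fin: "finite I"
  shows "(if (\<Sum>i\<in>I. \<bar>m i\<bar>) \<le> int (10 * card I) then 1 else 0)
           \<le> exp (real (card I)) * (\<Prod>i\<in>I. exp (- \<bar>real_of_int (m i)\<bar> / 10))"
proof -
  have "exp (real (card I)) * (\<Prod>i\<in>I. exp (- \<bar>real_of_int (m i)\<bar> / 10))
      = exp (real (card I) + (\<Sum>i\<in>I. - \<bar>real_of_int (m i)\<bar> / 10))"
    using fin by (simp add: exp_add exp_sum)
  also have "real (card I) + (\<Sum>i\<in>I. - \<bar>real_of_int (m i)\<bar> / 10)
      = (10 * real (card I) - (\<Sum>i\<in>I. \<bar>real_of_int (m i)\<bar>)) / 10"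
    by (simp add: sum_negf sum_divide_distrib[symmetric] diff_divide_distrib)
  finally have tilt: "exp (real (card I)) * (\<Prod>i\<in>I. exp (- \<bar>real_of_int (m i)\<bar> / 10))
      = exp ((10 * real (card I) - (\<Sum>i\<in>I. \<bar>real_of_int (m i)\<bar>)) / 10)" .
  have "(\<Sum>i\<in>I. \<bar>real_of_int (m i)\<bar>) \<le> 10 * real (card I)" if "(\<Sum>i\<in>I. \<bar>m i\<bar>) \<le> int (10 * card I)"
  proof -
    have "(\<Sum>i\<in>I. \<bar>real_of_int (m i)\<bar>) = real_of_int (\<Sum>i\<in>I. \<bar>m i\<bar>)"
      by simp
    with that show ?thesis
      by linarith
  qed
  then show ?thesis
    unfolding tilt by (cases "(\<Sum>i\<in>I. \<bar>m i\<bar>) \<le> int (10 * card I)") simp_all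
qed

lemma card_int_vectors_l1_ball_le:
  fixes I :: "'a set"
  assumes fin: "finite I"
  defines "R \<equiv> int (10 * card I)"
  shows "real (card {m \<in> PiE I (\<lambda>_. {- R..R}). (\<Sum>i\<in>I. \<bar>m i\<bar>) \<le> R}) \<le> (21 * exp 1) ^ card I"
proof -
  define P where "P = PiE I (\<lambda>_. {- R..R})"
  have "finite P"
    unfolding P_def using fin by (simp add: finite_PiE)
  then have "real (card {m \<in> P. (\<Sum>i\<in>I. \<bar>m i\<bar>) \<le> R})
      = (\<Sum>m\<in>P. if (\<Sum>i\<in>I. \<bar>m i\<bar>) \<le> R then 1 else 0)"
    by (simp add: sum.If_cases Int_def)
  also have "\<dots> \<le> (\<Sum>m\<in>P. exp (real (card I)) * (\<Prod>i\<in>I. exp (- \<bar>real_of_int (m i)\<bar> / 10)))"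
    using indicator_l1_ball_le_exp[OF fin] unfolding R_def by (intro sum_mono) simp
  also have "\<dots> = exp (real (card I)) * (\<Prod>i\<in>I. \<Sum>j\<in>{- R..R}. exp (- \<bar>real_of_int j\<bar> / 10))"
    unfolding P_def
    using prod_sum_PiE[OF fin, of "\<lambda>_. {- R..R}" "\<lambda>i j. exp (- \<bar>real_of_int j\<bar> / 10)"]
    by (simp add: sum_distrib_left)
  also have "\<dots> \<le> exp (real (card I)) * 21 ^ card I"
  proof -
    have "(\<Sum>j\<in>{- R..R}. exp (- \<bar>real_of_int j\<bar> / 10)) \<le> 21"
      using sum_exp_neg_abs_div_10_le[of "10 * card I"] unfolding R_def
      by (smt (verit) exp_gt_zero)
    then have "(\<Prod>i\<in>I. \<Sum>j\<in>{- R..R}. exp (- \<bar>real_of_int j\<bar> / 10)) \<le> (\<Prod>i\<in>I. 21)"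
      by (intro prod_mono) (auto intro: sum_nonneg)
    then show ?thesis
      by simp
  qed
  also have "\<dots> = (21 * exp 1) ^ card I"
    by (simp add: power_mult_distrib exp_of_nat_mult[symmetric] mult.commute)
  finally show ?thesis
    unfolding P_def .
qed

lemma unit_ball_net_subset_image:
  defines "R \<equiv> \<lambda>I. int (10 * card I)"
  shows "unit_ball_net I \<subseteq> (\<lambda>m i. real_of_int (m i) / (10 * sqrt (card I)))
           ` {m \<in> PiE I (\<lambda>_. {- R I..R I}). (\<Sum>i\<in>I. \<bar>m i\<bar>) \<le> R I}"
  unfolding unit_ball_net_def R_def by auto

lemma finite_unit_ball_net: "finite I \<Longrightarrow> finite (unit_ball_net I)"
  by (rule finite_subset[OF unit_ball_net_subset_image]) (simp add: finite_PiE)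

lemma card_unit_ball_net_le:
  assumes "finite I"
  shows "real (card (unit_ball_net I)) \<le> (21 * exp 1) ^ card I"
proof -
  define R where "R = int (10 * card I)"
  define S where "S = {m \<in> PiE I (\<lambda>_. {- R..R}). (\<Sum>i\<in>I. \<bar>m i\<bar>) \<le> R}"
  have "finite S"
    using assms by (simp add: S_def finite_PiE)
  then have "card (unit_ball_net I) \<le> card S"
    using unit_ball_net_subset_image[of I] unfolding S_def R_def
    by (meson card_image_le card_mono finite_imageI le_trans)
  then have "real (card (unit_ball_net I)) \<le> real (card S)"
    by simp
  also have "\<dots> \<le> (21 * exp 1) ^ card I"
    using card_int_vectors_l1_ball_le[OF assms] unfolding S_def R_def .
  finally show ?thesis .
qed

lemma sum_abs_le_sqrt_card:
  assumes "(\<Sum>i\<in>I. (x i)\<^sup>2) \<le> (1::real)"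
  shows "(\<Sum>i\<in>I. \<bar>x i\<bar>) \<le> sqrt (card I)"
proof -
  have "(\<Sum>i\<in>I. \<bar>x i\<bar>)\<^sup>2 \<le> (\<Sum>i\<in>I. \<bar>x i\<bar>\<^sup>2) * card I"
    by (rule sum_squared_le_sum_of_squares)
  also have "\<dots> \<le> card I"
    using mult_right_mono[OF assms, of "real (card I)"] by simp
  finally show ?thesis
    by (simp add: real_le_rsqrt)
qed

text \<open>Rounding \<open>10 \<surd>|I| \<cdot> x\<close> toward zero shrinks every coordinate, so the rounded point stays in
  the ball and, by \<open>sum_abs_le_sqrt_card\<close>, within the \<open>\<ell>\<^sub>1\<close> bound of the net. The integer vector is
  restricted to \<open>I\<close> because the net only contains points coming from extensional vectors.\<close>

definition round_to_net :: "'a set \<Rightarrow> ('a \<Rightarrow> real) \<Rightarrow> 'a \<Rightarrow> real" where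
  "round_to_net I x = (\<lambda>i. real_of_int (restrict (\<lambda>i. round_toward_zero (10 * sqrt (card I) * x i)) I i)
                              / (10 * sqrt (card I)))"

lemma round_to_net_in_unit_ball_net:
  assumes fin: "finite I" and x: "(\<Sum>i\<in>I. (x i)\<^sup>2) \<le> 1"
  shows "round_to_net I x \<in> unit_ball_net I"
proof -
  define c where "c = 10 * sqrt (card I)"
  define m where "m = restrict (\<lambda>i. round_toward_zero (c * x i)) I"
  have m_le: "\<bar>real_of_int (m i)\<bar> \<le> c * \<bar>x i\<bar>" if "i \<in> I" for i
    using that abs_round_toward_zero_le[of "c * x i"] by (simp add: m_def c_def abs_mult)
  have "(\<Sum>i\<in>I. \<bar>real_of_int (m i)\<bar>) \<le> (\<Sum>i\<in>I. c * \<bar>x i\<bar>)"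
    by (rule sum_mono) (rule m_le)
  also have "\<dots> \<le> c * sqrt (card I)"
    using sum_abs_le_sqrt_card[OF x] by (simp add: c_def mult_left_mono flip: sum_distrib_left)
  also have "\<dots> = 10 * card I"
    by (simp add: c_def)
  finally have "real_of_int (\<Sum>i\<in>I. \<bar>m i\<bar>) \<le> real_of_int (int (10 * card I))"
    by simp
  then have m_l1: "(\<Sum>i\<in>I. \<bar>m i\<bar>) \<le> int (10 * card I)"
    by (simp only: of_int_le_iff)
  have "\<bar>m i\<bar> \<le> int (10 * card I)" if "i \<in> I" for i
    using member_le_sum[of i I "\<lambda>i. \<bar>m i\<bar>"] fin that m_l1 by auto
  then have m_box: "m \<in> PiE I (\<lambda>_. {- int (10 * card I)..int (10 * card I)})"
    unfolding m_def by (force simp: PiE_iff abs_le_iff)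
  have "(round_to_net I x i)\<^sup>2 \<le> (x i)\<^sup>2" if "i \<in> I" for i
  proof (cases "I = {}")
    case False
    then have "0 < c"
      using fin by (simp add: c_def card_gt_0_iff)
    then have "\<bar>round_to_net I x i\<bar> \<le> \<bar>x i\<bar>"
      using m_le[OF that] by (simp add: round_to_net_def m_def c_def divide_le_eq mult.commute)
    then show ?thesis
      by (simp add: abs_le_square_iff)
  qed (use that in simp)
  then have "(\<Sum>i\<in>I. (round_to_net I x i)\<^sup>2) \<le> (\<Sum>i\<in>I. (x i)\<^sup>2)"
    by (rule sum_mono)
  with x have "(\<Sum>i\<in>I. (round_to_net I x i)\<^sup>2) \<le> 1"
    by linarith
  moreover have "round_to_net I x = (\<lambda>i. real_of_int (m i) / (10 * sqrt (card I)))"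
    by (simp add: round_to_net_def m_def c_def)
  ultimately show ?thesis
    using m_box m_l1 unfolding unit_ball_net_def by blast
qed

lemma sum_square_diff_round_to_net_le:
  assumes "finite I" "I \<noteq> {}"
  shows "(\<Sum>i\<in>I. (x i - round_to_net I x i)\<^sup>2) \<le> 1/100"
proof -
  define c where "c = 10 * sqrt (card I)"
  have c0: "0 < c"
    using assms by (simp add: c_def card_gt_0_iff)
  have "(x i - round_to_net I x i)\<^sup>2 \<le> 1 / c\<^sup>2" if "i \<in> I" for i
  proof -
    have "\<bar>c * x i - real_of_int (round_toward_zero (c * x i))\<bar> < 1"
      by (rule abs_diff_round_toward_zero_less)
    also have "c * x i - real_of_int (round_toward_zero (c * x i)) = c * (x i - round_to_net I x i)"
      using that c0 by (simp add: round_to_net_def c_def field_simps)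
    finally have "c * \<bar>x i - round_to_net I x i\<bar> < 1"
      by (simp only: abs_mult abs_of_pos[OF c0])
    then have "\<bar>x i - round_to_net I x i\<bar> \<le> 1 / c"
      using c0 by (simp add: field_simps)
    then show ?thesis
      using power_mono[OF _ abs_ge_zero, of _ "1 / c" 2] by (simp add: power_divide)
  qed
  then have "(\<Sum>i\<in>I. (x i - round_to_net I x i)\<^sup>2) \<le> card I / c\<^sup>2"
    using sum_mono[of I _ "\<lambda>_. 1 / c\<^sup>2"] by simp
  also have "\<dots> = 1/100"
    using c0 by (simp add: c_def power_mult_distrib)
  finally show ?thesis .
qed

section \<open>Bilinear forms controlled on nets\<close>

definition bilinear_form ::
    "'a set \<Rightarrow> 'b set \<Rightarrow> ('a \<Rightarrow> 'b \<Rightarrow> real) \<Rightarrow> ('a \<Rightarrow> real) \<Rightarrow> ('b \<Rightarrow> real) \<Rightarrow> real" where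
  "bilinear_form I J q x y = (\<Sum>i\<in>I. \<Sum>j\<in>J. x i * y j * q i j)"

lemma bilinear_form_scale:
  "bilinear_form I J q (\<lambda>i. c * x i) (\<lambda>j. d * y j) = c * d * bilinear_form I J q x y"
  by (simp add: bilinear_form_def sum_distrib_left algebra_simps)

lemma bilinear_form_diff_left:
  "bilinear_form I J q (\<lambda>i. x i - x' i) y = bilinear_form I J q x y - bilinear_form I J q x' y"
  by (simp add: bilinear_form_def algebra_simps sum_subtractf)

lemma bilinear_form_diff_right:
  "bilinear_form I J q x (\<lambda>j. y j - y' j) = bilinear_form I J q x y - bilinear_form I J q x y'"
  by (simp add: bilinear_form_def algebra_simps sum_subtractf)

lemma abs_le_1_of_sum_squares_le_1:
  assumes "finite I" "i \<in> I" "(\<Sum>i\<in>I. (x i)\<^sup>2) \<le> (1::real)"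
  shows "\<bar>x i\<bar> \<le> 1"
proof -
  have "(x i)\<^sup>2 \<le> 1"
    using member_le_sum[of i I "\<lambda>i. (x i)\<^sup>2"] assms by simp
  then show ?thesis
    by (simp add: abs_square_le_1)
qed

lemma bilinear_form_le_sum_abs:
  assumes "finite I" "finite J" "(\<Sum>i\<in>I. (x i)\<^sup>2) \<le> 1" "(\<Sum>j\<in>J. (y j)\<^sup>2) \<le> 1"
  shows "bilinear_form I J q x y \<le> (\<Sum>i\<in>I. \<Sum>j\<in>J. \<bar>q i j\<bar>)"
  unfolding bilinear_form_def
proof (intro sum_mono)
  fix i j assume "i \<in> I" "j \<in> J"
  then have "\<bar>x i\<bar> \<le> 1" "\<bar>y j\<bar> \<le> 1"
    using abs_le_1_of_sum_squares_le_1[OF assms(1) _ assms(3)]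
      abs_le_1_of_sum_squares_le_1[OF assms(2) _ assms(4)] by simp_all
  then have "\<bar>x i * y j\<bar> \<le> 1"
    by (simp add: abs_mult mult_le_one)
  have "x i * y j * q i j \<le> \<bar>x i * y j\<bar> * \<bar>q i j\<bar>"
    by (metis abs_ge_self abs_mult)
  also have "\<dots> \<le> \<bar>q i j\<bar>"
    using mult_right_mono[OF \<open>\<bar>x i * y j\<bar> \<le> 1\<close> abs_ge_zero] by simp
  finally show "x i * y j * q i j \<le> \<bar>q i j\<bar>" .
qed

lemma bilinear_form_le_scaled:
  assumes K: "\<And>x y. (\<Sum>i\<in>I. (x i)\<^sup>2) \<le> 1 \<Longrightarrow> (\<Sum>j\<in>J. (y j)\<^sup>2) \<le> 1 \<Longrightarrow> bilinear_form I J q x y \<le> K"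
    and x: "(\<Sum>i\<in>I. (x i)\<^sup>2) \<le> \<rho>\<^sup>2" and y: "(\<Sum>j\<in>J. (y j)\<^sup>2) \<le> \<sigma>\<^sup>2"
    and "0 < \<rho>" "0 < \<sigma>"
  shows "bilinear_form I J q x y \<le> \<rho> * \<sigma> * K"
proof -
  have "(\<Sum>i\<in>I. (1 / \<rho> * x i)\<^sup>2) \<le> 1" "(\<Sum>j\<in>J. (1 / \<sigma> * y j)\<^sup>2) \<le> 1"
    using x y \<open>0 < \<rho>\<close> \<open>0 < \<sigma>\<close>
    by (simp_all add: power_divide divide_le_eq_1 flip: sum_divide_distrib)
  then have "1 / \<rho> * (1 / \<sigma>) * bilinear_form I J q x y \<le> K"
    using K by (simp only: bilinear_form_scale[symmetric])
  then show ?thesis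
    using \<open>0 < \<rho>\<close> \<open>0 < \<sigma>\<close> by (simp add: field_simps)
qed

text \<open>If \<open>K\<close> is the supremum of the form on the product of unit balls, approximating both
  arguments by net points within \<open>1/10\<close> gives \<open>K \<le> s + K/10 + K/10\<close>.\<close>

lemma bilinear_form_le_of_net:
  assumes fin: "finite I" "finite J" and ne: "I \<noteq> {}" "J \<noteq> {}"
    and net: "\<And>x y. x \<in> unit_ball_net I \<Longrightarrow> y \<in> unit_ball_net J \<Longrightarrow> bilinear_form I J q x y \<le> s"
    and x: "(\<Sum>i\<in>I. (x i)\<^sup>2) \<le> 1" and y: "(\<Sum>j\<in>J. (y j)\<^sup>2) \<le> 1"
  shows "bilinear_form I J q x y \<le> 5/4 * s"
proof -
  define D where "D = {bilinear_form I J q x y | x y. (\<Sum>i\<in>I. (x i)\<^sup>2) \<le> 1 \<and> (\<Sum>j\<in>J. (y j)\<^sup>2) \<le> 1}"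
  have bdd: "bdd_above D"
    unfolding D_def using bilinear_form_le_sum_abs[OF fin]
    by (intro bdd_aboveI[where M="\<Sum>i\<in>I. \<Sum>j\<in>J. \<bar>q i j\<bar>"]) blast
  have le_Sup: "bilinear_form I J q x y \<le> Sup D"
    if "(\<Sum>i\<in>I. (x i)\<^sup>2) \<le> 1" "(\<Sum>j\<in>J. (y j)\<^sup>2) \<le> 1" for x y
    using that bdd unfolding D_def by (intro cSup_upper) blast+
  have "v \<le> s + Sup D / 5" if "v \<in> D" for v
  proof -
    obtain x y where v: "v = bilinear_form I J q x y"
      and x: "(\<Sum>i\<in>I. (x i)\<^sup>2) \<le> 1" and y: "(\<Sum>j\<in>J. (y j)\<^sup>2) \<le> 1"
      using \<open>v \<in> D\<close> unfolding D_def by blast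
    define x0 where "x0 = round_to_net I x"
    define y0 where "y0 = round_to_net J y"
    have x0: "x0 \<in> unit_ball_net I" "(\<Sum>i\<in>I. (x i - x0 i)\<^sup>2) \<le> (1/10)\<^sup>2"
      unfolding x0_def using round_to_net_in_unit_ball_net[OF fin(1) x]
        sum_square_diff_round_to_net_le[OF fin(1) ne(1)] by (simp_all add: power_divide)
    have y0: "y0 \<in> unit_ball_net J" "(\<Sum>j\<in>J. (y j - y0 j)\<^sup>2) \<le> (1/10)\<^sup>2"
      unfolding y0_def using round_to_net_in_unit_ball_net[OF fin(2) y]
        sum_square_diff_round_to_net_le[OF fin(2) ne(2)] by (simp_all add: power_divide)
    have "v = bilinear_form I J q x0 y0 + bilinear_form I J q (\<lambda>i. x i - x0 i) y
        + bilinear_form I J q x0 (\<lambda>j. y j - y0 j)"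
      by (simp add: v bilinear_form_diff_left bilinear_form_diff_right)
    also have "\<dots> \<le> s + 1/10 * 1 * Sup D + 1 * (1/10) * Sup D"
      using net[OF x0(1) y0(1)] x0 y0 y unit_ball_net_norm_le[OF x0(1)]
      by (intro add_mono bilinear_form_le_scaled[OF le_Sup]) auto
    finally show ?thesis
      by simp
  qed
  then have "Sup D \<le> s + Sup D / 5"
    using x y unfolding D_def by (intro cSup_least) blast+
  then show ?thesis
    using le_Sup[OF x y] by simp
qed

lemma sum_square_le_of_bilinear_form_le:
  assumes fin: "finite I"
    and K: "\<And>x y. (\<Sum>i\<in>I. (x i)\<^sup>2) \<le> 1 \<Longrightarrow> (\<Sum>j\<in>J. (y j)\<^sup>2) \<le> 1 \<Longrightarrow> bilinear_form I J q x y \<le> K"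
  shows "(\<Sum>j\<in>J. (\<Sum>i\<in>I. x i * q i j)\<^sup>2) \<le> K\<^sup>2 * (\<Sum>i\<in>I. (x i)\<^sup>2)"
proof -
  define z where "z = (\<lambda>j. \<Sum>i\<in>I. x i * q i j)"
  define \<zeta> where "\<zeta> = sqrt (\<Sum>j\<in>J. (z j)\<^sup>2)"
  define \<rho> where "\<rho> = sqrt (\<Sum>i\<in>I. (x i)\<^sup>2)"
  have zz: "(\<Sum>j\<in>J. (z j)\<^sup>2) = \<zeta>\<^sup>2" and xx: "(\<Sum>i\<in>I. (x i)\<^sup>2) = \<rho>\<^sup>2"
    unfolding \<zeta>_def \<rho>_def by (simp_all add: sum_nonneg)
  show ?thesis
  proof (cases "\<zeta> = 0")
    case False
    then have \<zeta>0: "0 < \<zeta>"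
      unfolding \<zeta>_def by (simp add: sum_nonneg order_less_le)
    have "\<rho> \<noteq> 0"
    proof
      assume "\<rho> = 0"
      then have "\<forall>i\<in>I. x i = 0"
        using xx fin by (simp add: sum_nonneg_eq_0_iff)
      then show False
        using False by (simp add: \<zeta>_def z_def)
    qed
    then have \<rho>0: "0 < \<rho>"
      unfolding \<rho>_def by (simp add: sum_nonneg order_less_le)
    have "bilinear_form I J q x (\<lambda>j. z j / \<zeta>) = (\<Sum>j\<in>J. (z j)\<^sup>2) / \<zeta>"
      unfolding bilinear_form_def z_def
      by (subst sum.swap) (simp add: sum_distrib_left sum_divide_distrib power2_eq_square algebra_simps)
    also have "\<dots> = \<zeta>"
      using zz \<zeta>0 by (simp add: power2_eq_square)
    finally have "\<zeta> \<le> \<rho> * 1 * K"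
      using bilinear_form_le_scaled[OF K, of x \<rho> "\<lambda>j. z j / \<zeta>" 1] xx zz \<rho>0 \<zeta>0
      by (simp add: power_divide flip: sum_divide_distrib)
    then have "\<zeta>\<^sup>2 \<le> (\<rho> * K)\<^sup>2"
      using \<zeta>0 by (intro power_mono) auto
    then show ?thesis
      using zz xx by (simp add: z_def power_mult_distrib mult.commute)
  qed (use zz xx in \<open>simp add: z_def\<close>)
qed

lemma power_self_le_exp_mult_fact: "real k ^ k \<le> exp (real k) * fact k"
proof (induction k)
  case (Suc k)
  have "real (Suc k) ^ k \<le> exp 1 * real k ^ k"
  proof (cases "k = 0")
    case False
    have "real (Suc k) ^ k = real k ^ k * (1 + 1 / real k) ^ k"
      using False by (simp add: power_mult_distrib[symmetric] field_simps)
    also have "\<dots> \<le> real k ^ k * exp 1"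
      using exp_ge_one_plus_x_over_n_power_n[of k 1] False by (intro mult_left_mono) auto
    finally show ?thesis
      by (simp add: mult.commute)
  qed simp
  then have "real (Suc k) ^ Suc k \<le> real (Suc k) * (exp 1 * real k ^ k)"
    by (simp add: mult_left_mono)
  also have "\<dots> \<le> real (Suc k) * (exp 1 * (exp (real k) * fact k))"
    using Suc.IH by (intro mult_left_mono) auto
  also have "\<dots> = exp (real (Suc k)) * fact (Suc k)"
    by (simp add: exp_add[symmetric] algebra_simps)
  finally show ?case .
qed simp

lemma binomial_le_power_mult_exp:
  fixes c :: real
  assumes "0 < c"
  shows "real (n choose k) \<le> c ^ k * exp (real n / c)"
proof (cases "k = 0")
  case False
  then have k0: "0 < real k"
    by simp
  have "real (n choose k) * fact k \<le> real n ^ k"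
    by (metis binomial_fact_pow of_nat_fact of_nat_le_iff of_nat_mult of_nat_power)
  then have "real (n choose k) \<le> real n ^ k / fact k"
    by (simp add: field_simps)
  also have "\<dots> \<le> real n ^ k * exp (real k) / real k ^ k"
    using mult_left_mono[OF power_self_le_exp_mult_fact[of k], of "real n ^ k"] k0
    by (simp add: field_simps)
  also have "\<dots> = exp (real k) * c ^ k * (real n / (c * real k)) ^ k"
    using k0 assms by (simp add: field_simps power_mult_distrib power_divide)
  also have "\<dots> \<le> exp (real k) * c ^ k * exp (real n / (c * real k) - 1) ^ k"
    using exp_ge_add_one_self[of "real n / (c * real k) - 1"] assms
    by (intro mult_left_mono power_mono) auto
  also have "exp (real n / (c * real k) - 1) ^ k = exp (real n / c - real k)"
    using k0 by (simp add: exp_of_nat_mult[symmetric] field_simps)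
  also have "exp (real k) * c ^ k * exp (real n / c - real k) = c ^ k * exp (real n / c)"
    by (simp add: exp_diff)
  finally show ?thesis .
qed (use assms in simp)

lemma exp_12_ge: "(41013::real) \<le> exp 12"
proof -
  have "(41013::real) \<le> (5/2) ^ 12"
    by (simp add: power_divide)
  also have "\<dots> \<le> exp 1 ^ 12"
    using exp_lower_Taylor_quadratic[of 1] by (intro power_mono) auto
  also have "\<dots> = exp 12"
    by (simp add: exp_of_nat_mult[symmetric])
  finally show ?thesis .
qed

section \<open>Random sign matrices\<close>

definition sign_matrices :: "nat \<Rightarrow> ('n \<times> nat \<Rightarrow> real) set" where
  "sign_matrices k = PiE (UNIV \<times> {..<k}) (\<lambda>_. {-1, 1})"

lemma card_sign_matrices: "card (sign_matrices k :: ('n::finite \<times> nat \<Rightarrow> real) set) = 2 ^ (CARD('n) * k)"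
  by (simp add: sign_matrices_def card_PiE card_cartesian_product numeral_2_eq_2)

lemma sign_matrices_square:
  assumes "Q \<in> sign_matrices k" "l < k"
  shows "(Q (i, l))\<^sup>2 = 1"
proof -
  have "Q (i, l) \<in> {-1, 1}"
    using assms by (auto simp: sign_matrices_def PiE_iff)
  then show ?thesis
    by auto
qed

lemma card_sign_matrices_bilinear_form_ge:
  fixes T :: "'n::finite set" and x :: "'n \<Rightarrow> real" and y :: "nat \<Rightarrow> real"
  assumes x: "(\<Sum>i\<in>T. (x i)\<^sup>2) \<le> 1" and y: "(\<Sum>l<k. (y l)\<^sup>2) \<le> 1" and "0 \<le> s"
  shows "real (card {Q \<in> sign_matrices k. s \<le> bilinear_form T {..<k} (\<lambda>i l. Q (i, l)) x y})
           \<le> 2 ^ (CARD('n) * k) * exp (- s\<^sup>2 / 2)"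
proof -
  define w where "w = (\<lambda>(i, l). if i \<in> T then x i * y l else 0)"
  have "bilinear_form T {..<k} (\<lambda>i l. Q (i, l)) x y = (\<Sum>p\<in>UNIV \<times> {..<k}. w p * Q p)" for Q
  proof -
    have "(\<Sum>p\<in>UNIV \<times> {..<k}. w p * Q p) = (\<Sum>i\<in>UNIV. \<Sum>l<k. w (i, l) * Q (i, l))"
      by (simp add: sum.cartesian_product)
    also have "\<dots> = (\<Sum>i\<in>UNIV. if i \<in> T then (\<Sum>l<k. x i * y l * Q (i, l)) else 0)"
      by (rule sum.cong) (auto simp: w_def)
    finally have "(\<Sum>p\<in>UNIV \<times> {..<k}. w p * Q p)
        = (\<Sum>i\<in>UNIV. if i \<in> T then (\<Sum>l<k. x i * y l * Q (i, l)) else 0)" .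
    then show ?thesis
      by (simp add: bilinear_form_def sum.If_cases)
  qed
  moreover have "(\<Sum>p\<in>UNIV \<times> {..<k}. (w p)\<^sup>2) = (\<Sum>i\<in>T. (x i)\<^sup>2) * (\<Sum>l<k. (y l)\<^sup>2)"
  proof -
    have "(\<Sum>p\<in>UNIV \<times> {..<k}. (w p)\<^sup>2) = (\<Sum>i\<in>UNIV. \<Sum>l<k. (w (i, l))\<^sup>2)"
      by (simp add: sum.cartesian_product)
    also have "\<dots> = (\<Sum>i\<in>UNIV. if i \<in> T then (\<Sum>l<k. (x i)\<^sup>2 * (y l)\<^sup>2) else 0)"
      by (rule sum.cong) (auto simp: w_def power_mult_distrib)
    finally show ?thesis
      by (simp add: sum.If_cases sum_product)
  qed
  moreover have "(\<Sum>i\<in>T. (x i)\<^sup>2) * (\<Sum>l<k. (y l)\<^sup>2) \<le> 1"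
    using x y by (simp add: mult_le_one sum_nonneg)
  ultimately show ?thesis
    using card_sign_vectors_sum_ge[of "UNIV \<times> {..<k}" w s] \<open>0 \<le> s\<close>
    by (simp add: sign_matrices_def card_cartesian_product)
qed

lemma sign_matrix_union_bound_lt_1:
  fixes n :: real
  shows "93 ^ k * exp (n / 93) * ((21 * exp 1) ^ k)\<^sup>2 * exp (- (14 * real k + n / 93 + 1)) < 1"
proof -
  have "(21 * exp 1) * (21 * exp 1) = (441 * exp 2 :: real)"
    using exp_add[of 1 "1::real"] by simp
  then have "((21 * exp 1) ^ k)\<^sup>2 = (441 * exp 2 :: real) ^ k"
    unfolding power2_eq_square power_mult_distrib[symmetric] by simp
  then have "93 ^ k * ((21 * exp 1) ^ k)\<^sup>2 = (93 * (441 * exp 2 :: real)) ^ k"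
    by (simp only: power_mult_distrib)
  also have "93 * (441 * exp 2) = (41013 * exp 2 :: real)"
    by simp
  also have "(41013 * exp 2) ^ k = 41013 ^ k * exp (real k * 2)"
    by (simp only: power_mult_distrib exp_of_nat_mult)
  finally have base: "93 ^ k * ((21 * exp 1) ^ k)\<^sup>2 = 41013 ^ k * exp (real k * 2)" .
  have "real k * 2 + n / 93 + - (14 * real k + n / 93 + 1) = - 12 * real k - 1"
    by simp
  then have exponent: "exp (real k * 2) * (exp (n / 93) * exp (- (14 * real k + n / 93 + 1)))
      = exp (- 12 * real k - 1)"
    by (simp only: exp_add[symmetric] add.assoc)
  have "93 ^ k * exp (n / 93) * ((21 * exp 1) ^ k)\<^sup>2 * exp (- (14 * real k + n / 93 + 1))
      = (93 ^ k * ((21 * exp 1) ^ k)\<^sup>2) * (exp (n / 93) * exp (- (14 * real k + n / 93 + 1)))"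
    by (simp only: mult_ac)
  also have "\<dots> = 41013 ^ k * exp (- 12 * real k - 1)"
    by (simp only: base exponent mult.assoc)
  also have "\<dots> \<le> exp 12 ^ k * exp (- 12 * real k - 1)"
    using exp_12_ge by (intro mult_right_mono power_mono) auto
  also have "\<dots> = exp (-1)"
    by (simp add: exp_of_nat_mult[symmetric] flip: exp_add)
  also have "\<dots> < 1"
    by simp
  finally show ?thesis .
qed

lemma card_row_set_nets_le:
  "real (card (SIGMA T:{T::'n::finite set. card T = k}. unit_ball_net T \<times> unit_ball_net {..<k}))
     \<le> 93 ^ k * exp (real CARD('n) / 93) * ((21 * exp 1) ^ k)\<^sup>2"
proof -
  define subsets where "subsets = {T::'n set. card T = k}"
  have "real (card (SIGMA T:subsets. unit_ball_net T \<times> unit_ball_net {..<k}))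
      = (\<Sum>T\<in>subsets. real (card (unit_ball_net T)) * real (card (unit_ball_net {..<k})))"
    by (simp add: card_cartesian_product finite_unit_ball_net)
  also have "\<dots> \<le> (\<Sum>T\<in>subsets. (21 * exp 1) ^ k * (21 * exp 1) ^ k)"
    using card_unit_ball_net_le[of "{..<k}"] card_unit_ball_net_le[of "_ :: 'n set"]
    by (intro sum_mono mult_mono) (auto simp: subsets_def)
  also have "\<dots> = real (CARD('n) choose k) * ((21 * exp 1) ^ k)\<^sup>2"
    using n_subsets[of "UNIV :: 'n set" k] by (simp add: subsets_def power2_eq_square)
  also have "\<dots> \<le> 93 ^ k * exp (real CARD('n) / 93) * ((21 * exp 1) ^ k)\<^sup>2"
    by (intro mult_right_mono binomial_le_power_mult_exp) simp_all
  finally show ?thesis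
    unfolding subsets_def .
qed

text \<open>The level \<open>s\<close> is chosen so that \<open>exp (s\<^sup>2 / 2) = e\<^bsup>14 k + n/93 + 1\<^esup>\<close> is at least \<open>e\<close> times
  the bound of \<open>card_row_set_nets_le\<close> on the number of tests, since \<open>93 \<cdot> 21\<^sup>2 \<le> e\<^sup>1\<^sup>2\<close>.\<close>

lemma exists_sign_matrix_bilinear_form_lt_on_nets:
  fixes k :: nat
  defines "s \<equiv> sqrt (2 * (14 * real k + real CARD('n::finite) / 93 + 1))"
  shows "\<exists>Q \<in> sign_matrices k. \<forall>T::'n set. card T = k \<longrightarrow>
           (\<forall>x\<in>unit_ball_net T. \<forall>y\<in>unit_ball_net {..<k}. bilinear_form T {..<k} (\<lambda>i l. Q (i, l)) x y < s)"
proof -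
  define n where "n = CARD('n)"
  define E where "E = 2 ^ (n * k) * exp (- s\<^sup>2 / 2)"
  define nets where "nets = (SIGMA T:{T::'n set. card T = k}. unit_ball_net T \<times> unit_ball_net {..<k})"
  define bad where "bad = (\<lambda>(T :: 'n set, x, y). {Q \<in> sign_matrices k. s \<le> bilinear_form T {..<k} (\<lambda>i l. Q (i, l)) x y})"
  have card_bad: "real (card (bad p)) \<le> E" if p_nets: "p \<in> nets" for p
  proof -
    obtain T x y where p: "p = (T, x, y)" and "x \<in> unit_ball_net T" "y \<in> unit_ball_net {..<k}"
      using p_nets unfolding nets_def by (cases p) auto
    then show ?thesis
      using card_sign_matrices_bilinear_form_ge[OF unit_ball_net_norm_le unit_ball_net_norm_le, of x T y k s]
      by (simp add: bad_def E_def n_def s_def)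
  qed
  have "finite nets"
    unfolding nets_def by (intro finite_SigmaI finite_cartesian_product finite_unit_ball_net) auto
  then have "real (card (\<Union>p\<in>nets. bad p)) \<le> (\<Sum>p\<in>nets. real (card (bad p)))"
    using card_UN_le[of nets bad] by (simp flip: of_nat_sum)
  also have "\<dots> \<le> real (card nets) * E"
    using sum_mono[OF card_bad] by simp
  also have "\<dots> \<le> 93 ^ k * exp (real n / 93) * ((21 * exp 1) ^ k)\<^sup>2 * E"
    using card_row_set_nets_le[where 'n='n and k=k]
    by (intro mult_right_mono) (simp_all add: nets_def n_def E_def)
  also have "\<dots> = 2 ^ (n * k) * (93 ^ k * exp (real n / 93) * ((21 * exp 1) ^ k)\<^sup>2
      * exp (- (14 * real k + real n / 93 + 1)))"
    unfolding E_def s_def n_def by (simp add: mult_ac)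
  also have "\<dots> < 2 ^ (n * k)"
    using sign_matrix_union_bound_lt_1[of k "real n"] by simp
  finally have "card (\<Union>p\<in>nets. bad p) < card (sign_matrices k :: ('n \<times> nat \<Rightarrow> real) set)"
    by (simp add: card_sign_matrices n_def)
  moreover have "(\<Union>p\<in>nets. bad p) \<subseteq> sign_matrices k"
    unfolding bad_def by auto
  ultimately obtain Q where Q: "Q \<in> sign_matrices k" "Q \<notin> (\<Union>p\<in>nets. bad p)"
    by (metis less_irrefl subsetI subset_antisym)
  show ?thesis
  proof (intro bexI[OF _ Q(1)] allI impI ballI)
    fix T :: "'n set" and x y
    assume "card T = k" "x \<in> unit_ball_net T" "y \<in> unit_ball_net {..<k}"
    then have "Q \<notin> bad (T, x, y)"
      using Q(2) unfolding nets_def by blast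
    then show "bilinear_form T {..<k} (\<lambda>i l. Q (i, l)) x y < s"
      using Q(1) unfolding bad_def by simp
  qed
qed

lemma exists_sign_matrix_restricted_bound:
  fixes k :: nat
  assumes "1 \<le> k"
  shows "\<exists>Q \<in> sign_matrices k. \<forall>T::'n::finite set. card T = k \<longrightarrow> (\<forall>x.
           (\<Sum>l<k. (\<Sum>i\<in>T. x i * Q (i, l))\<^sup>2)
             \<le> 25/8 * (14 * real k + real CARD('n) / 93 + 1) * (\<Sum>i\<in>T. (x i)\<^sup>2))"
proof -
  define s where "s = sqrt (2 * (14 * real k + real CARD('n) / 93 + 1))"
  obtain Q where Q: "Q \<in> sign_matrices k" and net: "\<forall>T::'n set. card T = k \<longrightarrow>
      (\<forall>x\<in>unit_ball_net T. \<forall>y\<in>unit_ball_net {..<k}. bilinear_form T {..<k} (\<lambda>i l. Q (i, l)) x y < s)"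
    using exists_sign_matrix_bilinear_form_lt_on_nets[where 'n='n and k=k] unfolding s_def by blast
  have bound: "(\<Sum>l<k. (\<Sum>i\<in>T. x i * Q (i, l))\<^sup>2) \<le> (5/4 * s)\<^sup>2 * (\<Sum>i\<in>T. (x i)\<^sup>2)"
    if T: "card T = k" for T :: "'n set" and x
  proof (rule sum_square_le_of_bilinear_form_le)
    show "finite T"
      by simp
    fix x' :: "'n \<Rightarrow> real" and y :: "nat \<Rightarrow> real"
    assume "(\<Sum>i\<in>T. (x' i)\<^sup>2) \<le> 1" "(\<Sum>l<k. (y l)\<^sup>2) \<le> 1"
    moreover have "T \<noteq> {}" "{..<k} \<noteq> {}"
      using T assms by (auto simp: lessThan_empty_iff)
    ultimately show "bilinear_form T {..<k} (\<lambda>i l. Q (i, l)) x' y \<le> 5/4 * s"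
      using net T by (intro bilinear_form_le_of_net) (auto intro: less_imp_le)
  qed
  have s2: "(5/4 * s)\<^sup>2 = 25/8 * (14 * real k + real CARD('n) / 93 + 1)"
    unfolding power_mult_distrib s_def by (simp add: power2_eq_square)
  show ?thesis
    using Q bound unfolding s2 by blast
qed

section \<open>Gram matrices of sign matrices\<close>

definition gram :: "nat \<Rightarrow> ('n::finite \<times> nat \<Rightarrow> real) \<Rightarrow> real^'n^'n" where
  "gram k Q = (\<chi> i j. \<Sum>l<k. Q (i, l) * Q (j, l))"

lemma quadratic_form_gram:
  "(\<Sum>i\<in>T. \<Sum>j\<in>T. x i * gram k Q $ i $ j * x j) = (\<Sum>l<k. (\<Sum>i\<in>T. x i * Q (i, l))\<^sup>2)"
proof -
  have "(\<Sum>l<k. (\<Sum>i\<in>T. x i * Q (i, l))\<^sup>2) = (\<Sum>l<k. \<Sum>i\<in>T. \<Sum>j\<in>T. x i * Q (i, l) * (x j * Q (j, l)))"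
    by (simp add: power2_eq_square sum_product)
  also have "\<dots> = (\<Sum>i\<in>T. \<Sum>j\<in>T. \<Sum>l<k. x i * Q (i, l) * (x j * Q (j, l)))"
    by (subst sum.swap) (simp add: sum.swap[of _ "{..<k}"])
  also have "\<dots> = (\<Sum>i\<in>T. \<Sum>j\<in>T. x i * gram k Q $ i $ j * x j)"
    by (simp add: gram_def sum_distrib_left sum_distrib_right mult_ac)
  finally show ?thesis
    by simp
qed

lemma quadratic_form_mat_1:
  "(\<Sum>i\<in>T. \<Sum>j\<in>T. x i * (mat 1 :: real^'n::finite^'n) $ i $ j * x j) = (\<Sum>i\<in>T. (x i)\<^sup>2)"
proof -
  have "x i * (mat 1 :: real^'n^'n) $ i $ j * x j = (if i = j then x i * x j else 0)" for i j
    by (simp add: mat_def)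
  then show ?thesis
    by (simp add: power2_eq_square sum.delta cong: sum.cong)
qed

lemma shifted_gram_in_kpsd_closure:
  fixes Q :: "'n::finite \<times> nat \<Rightarrow> real"
  assumes "\<And>T x. card T = k \<Longrightarrow> (\<Sum>l<k. (\<Sum>i\<in>T. x i * Q (i, l))\<^sup>2) \<le> a * (\<Sum>i\<in>T. (x i)\<^sup>2)"
  shows "a *\<^sub>R mat 1 - gram k Q \<in> kpsd_closure k"
  unfolding kpsd_closure_def
proof (intro CollectI conjI allI impI)
  show "sym_mat (a *\<^sub>R mat 1 - gram k Q)"
    by (simp add: sym_mat_def transpose_def gram_def mat_def vec_eq_iff mult.commute eq_commute)
  fix T :: "'n set" assume T: "card T = k"
  show "principal_psd (a *\<^sub>R mat 1 - gram k Q) T"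
    unfolding principal_psd_def
  proof
    fix x :: "'n \<Rightarrow> real"
    have "(\<Sum>i\<in>T. \<Sum>j\<in>T. x i * (a *\<^sub>R mat 1 - gram k Q) $ i $ j * x j)
        = a * (\<Sum>i\<in>T. \<Sum>j\<in>T. x i * (mat 1 :: real^'n^'n) $ i $ j * x j)
          - (\<Sum>i\<in>T. \<Sum>j\<in>T. x i * gram k Q $ i $ j * x j)"
      by (simp add: algebra_simps sum_subtractf sum_distrib_left)
    also have "\<dots> = a * (\<Sum>i\<in>T. (x i)\<^sup>2) - (\<Sum>l<k. (\<Sum>i\<in>T. x i * Q (i, l))\<^sup>2)"
      by (simp only: quadratic_form_mat_1 quadratic_form_gram)
    finally show "0 \<le> (\<Sum>i\<in>T. \<Sum>j\<in>T. x i * (a *\<^sub>R mat 1 - gram k Q) $ i $ j * x j)"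
      using assms[OF T, of x] by simp
  qed
qed

lemma inner_mat_1: "(mat 1 :: real^'n::finite^'n) \<bullet> A = trace A"
proof -
  have "(mat 1 :: real^'n^'n) $ i $ j * A $ i $ j = (if i = j then A $ i $ j else 0)" for i j
    by (simp add: mat_def)
  then show ?thesis
    by (simp add: inner_vec_def trace_def sum.delta)
qed

lemma trace_gram:
  assumes "Q \<in> sign_matrices k"
  shows "trace (gram k Q :: real^'n::finite^'n) = real CARD('n) * real k"
  using sign_matrices_square[OF assms] by (simp add: trace_def gram_def power2_eq_square[symmetric])

lemma inner_gram_gram:
  "gram k Q \<bullet> (gram k Q :: real^'n::finite^'n) = (\<Sum>l<k. \<Sum>l'<k. (\<Sum>i\<in>UNIV. Q (i, l) * Q (i, l'))\<^sup>2)"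
proof -
  have "gram k Q \<bullet> gram k Q = (\<Sum>i\<in>UNIV. \<Sum>j\<in>UNIV. \<Sum>l<k. Q (i, l) * gram k Q $ i $ j * Q (j, l))"
    by (simp add: inner_vec_def gram_def sum_distrib_left sum_distrib_right mult_ac)
  also have "\<dots> = (\<Sum>l<k. \<Sum>i\<in>UNIV. \<Sum>j\<in>UNIV. Q (i, l) * gram k Q $ i $ j * Q (j, l))"
    by (subst sum.swap) (simp add: sum.swap[of _ "{..<k}"])
  also have "\<dots> = (\<Sum>l<k. \<Sum>l'<k. (\<Sum>i\<in>UNIV. Q (i, l) * Q (i, l'))\<^sup>2)"
    by (simp only: quadratic_form_gram)
  finally show ?thesis .
qed

text \<open>The diagonal terms \<open>l = l'\<close> alone contribute \<open>k n\<^sup>2\<close>.\<close>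

lemma norm_gram_square_ge:
  assumes "Q \<in> sign_matrices k"
  shows "real k * (real CARD('n))\<^sup>2 \<le> (norm (gram k Q :: real^'n::finite^'n))\<^sup>2"
proof -
  have "(real CARD('n))\<^sup>2 \<le> (\<Sum>l'<k. (\<Sum>i\<in>UNIV. Q (i, l) * Q (i, l'))\<^sup>2)" if "l < k" for l
  proof -
    have "(\<Sum>i\<in>UNIV. Q (i, l) * Q (i, l)) = real CARD('n)"
      using sign_matrices_square[OF assms that] by (simp add: power2_eq_square[symmetric])
    then show ?thesis
      using member_le_sum[of l "{..<k}" "\<lambda>l'. (\<Sum>i\<in>UNIV. Q (i, l) * Q (i, l'))\<^sup>2"] that by simp
  qed
  then have "(\<Sum>l<k. (real CARD('n))\<^sup>2) \<le> gram k Q \<bullet> (gram k Q :: real^'n^'n)"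
    unfolding inner_gram_gram by (intro sum_mono) simp
  then show ?thesis
    by (simp add: power2_norm_eq_inner)
qed

lemma psd_inner_gram_nonneg:
  assumes "psd N"
  shows "0 \<le> N \<bullet> gram k Q"
proof -
  have "N \<bullet> gram k Q = (\<Sum>l<k. (\<chi> i. Q (i, l)) \<bullet> (N *v (\<chi> i. Q (i, l))))"
    by (simp add: inner_vec_def matrix_vector_mult_def gram_def sum_distrib_left
        sum_distrib_right mult_ac sum.swap[of _ "{..<k}"])
  also have "\<dots> \<ge> 0"
    using assms unfolding psd_def by (intro sum_nonneg) blast
  finally show ?thesis .
qed

lemma inner_shifted_gram:
  assumes "Q \<in> sign_matrices k"
  shows "(a *\<^sub>R mat 1 - gram k Q) \<bullet> gram k Q
           = a * real CARD('n) * real k - (norm (gram k Q :: real^'n::finite^'n))\<^sup>2"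
  using trace_gram[OF assms]
  by (simp add: inner_diff_left inner_mat_1 power2_norm_eq_inner)

lemma norm_shifted_gram_square:
  assumes "Q \<in> sign_matrices k"
  shows "(norm (a *\<^sub>R mat 1 - gram k Q))\<^sup>2
           = real CARD('n) * a\<^sup>2 - 2 * a * real CARD('n) * real k + (norm (gram k Q :: real^'n::finite^'n))\<^sup>2"
proof -
  let ?Y = "gram k Q :: real^'n^'n"
  have "(norm (a *\<^sub>R mat 1 - ?Y))\<^sup>2 = (a *\<^sub>R mat 1 - ?Y) \<bullet> (a *\<^sub>R mat 1 - ?Y)"
    by (rule power2_norm_eq_inner)
  also have "\<dots> = a\<^sup>2 * (mat 1 \<bullet> (mat 1 :: real^'n^'n)) - 2 * a * (mat 1 \<bullet> ?Y) + ?Y \<bullet> ?Y"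
    by (simp add: inner_diff_left inner_diff_right inner_commute power2_eq_square algebra_simps)
  finally show ?thesis
    using trace_gram[OF assms] by (simp add: inner_mat_1 trace_I power2_norm_eq_inner mult_ac)
qed

section \<open>Distance to the PSD cone\<close>

lemma frob_eq_norm: "frob A = norm A"
  unfolding frob_def norm_eq_sqrt_inner inner_vec_def by (simp add: power2_eq_square)

lemma psd_zero: "psd 0"
  by (simp add: psd_def sym_mat_def transpose_def vec_eq_iff)

lemma distF_psd_ge_inner:
  assumes "\<And>N. psd N \<Longrightarrow> 0 \<le> N \<bullet> Y"
  shows "- (M \<bullet> Y) / norm Y \<le> distF_psd M"
  unfolding distF_psd_def
proof (rule cInf_greatest)
  show "{frob (M - N) |N. psd N} \<noteq> {}"
    using psd_zero by blast
  fix v assume "v \<in> {frob (M - N) |N. psd N}"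
  then obtain N where "psd N" and v: "v = norm (N - M)"
    by (auto simp: frob_eq_norm norm_minus_commute)
  have "- (M \<bullet> Y) \<le> (N - M) \<bullet> Y"
    using assms[OF \<open>psd N\<close>] by (simp add: inner_diff_left)
  also have "\<dots> \<le> v * norm Y"
    unfolding v by (rule norm_cauchy_schwarz)
  finally have "- (M \<bullet> Y) \<le> v * norm Y" .
  then have "- (M \<bullet> Y) / norm Y \<le> v * norm Y / norm Y"
    by (rule divide_right_mono) simp
  then show "- (M \<bullet> Y) / norm Y \<le> v"
    using v by (cases "Y = 0") simp_all
qed

lemma distF_psd_le_norm: "distF_psd M \<le> norm M"
  unfolding distF_psd_def
proof (rule cInf_lower)
  show "norm M \<in> {frob (M - N) |N. psd N}"
    using psd_zero by (force simp: frob_eq_norm)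
  show "bdd_below {frob (M - N) |N. psd N}"
    by (rule bdd_belowI[of _ 0]) (auto simp: frob_eq_norm)
qed

lemma distF_psd_le_distF_bar:
  assumes "M \<in> K" "norm M = 1"
  shows "distF_psd M \<le> distF_bar K"
  unfolding distF_bar_def
proof (rule cSup_upper)
  show "distF_psd M \<in> {distF_psd M |M. M \<in> K \<and> frob M = 1}"
    using assms by (auto simp: frob_eq_norm)
  show "bdd_above {distF_psd M |M. M \<in> K \<and> frob M = 1}"
    by (rule bdd_aboveI[of _ 1]) (auto simp: frob_eq_norm intro: order_trans[OF distF_psd_le_norm])
qed

lemma kpsd_closure_scaleR:
  assumes "A \<in> kpsd_closure k" "0 \<le> c"
  shows "c *\<^sub>R A \<in> kpsd_closure k"
proof -
  have "principal_psd (c *\<^sub>R A) S" if "principal_psd A S" for S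
  proof -
    have "(\<Sum>i\<in>S. \<Sum>j\<in>S. x i * (c *\<^sub>R A) $ i $ j * x j) = c * (\<Sum>i\<in>S. \<Sum>j\<in>S. x i * A $ i $ j * x j)"
      for x :: "'a \<Rightarrow> real"
      by (simp add: sum_distrib_left mult_ac)
    then show ?thesis
      using that \<open>0 \<le> c\<close> by (simp add: principal_psd_def)
  qed
  moreover have "sym_mat (c *\<^sub>R A)" if "sym_mat A"
    using that by (simp add: sym_mat_def transpose_def vec_eq_iff)
  ultimately show ?thesis
    using assms(1) by (simp add: kpsd_closure_def)
qed

lemma distF_bar_kpsd_closure_ge:
  fixes G :: "real^'n::finite^'n"
  assumes "G \<in> kpsd_closure k" and dual: "\<And>N. psd N \<Longrightarrow> 0 \<le> N \<bullet> Y" and "G \<bullet> Y < 0"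
  shows "- (G \<bullet> Y) / (norm G * norm Y) \<le> distF_bar (kpsd_closure k :: (real^'n^'n) set)"
proof -
  have "G \<noteq> 0"
    using \<open>G \<bullet> Y < 0\<close> by auto
  define M where "M = (1 / norm G) *\<^sub>R G"
  have "- (G \<bullet> Y) / (norm G * norm Y) = - (M \<bullet> Y) / norm Y"
    by (simp add: M_def field_simps)
  also have "\<dots> \<le> distF_psd M"
    using dual by (rule distF_psd_ge_inner)
  also have "\<dots> \<le> distF_bar (kpsd_closure k :: (real^'n^'n) set)"
  proof (rule distF_psd_le_distF_bar)
    show "M \<in> kpsd_closure k" "norm M = 1"
      using \<open>G \<noteq> 0\<close> assms(1) by (simp_all add: M_def kpsd_closure_scaleR)
  qed
  finally show ?thesis .
qed

lemma distF_bar_kpsd_closure_ge_shifted_gram: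
  fixes Q :: "'n::finite \<times> nat \<Rightarrow> real" and k :: nat
  defines "n \<equiv> real CARD('n)" and "F \<equiv> (norm (gram k Q :: real^'n^'n))\<^sup>2"
  assumes Q: "Q \<in> sign_matrices k" and "0 < k" "a < n"
    and bound: "\<And>T x. card T = k \<Longrightarrow> (\<Sum>l<k. (\<Sum>i\<in>T. x i * Q (i, l))\<^sup>2) \<le> a * (\<Sum>i\<in>T. (x i)\<^sup>2)"
  shows "(F - a * n * k) / (sqrt (n * a\<^sup>2 - 2 * a * n * k + F) * sqrt F)
           \<le> distF_bar (kpsd_closure k :: (real^'n^'n) set)"
proof -
  define Y where "Y = (gram k Q :: real^'n^'n)"
  define G where "G = a *\<^sub>R mat 1 - Y"
  have GY: "G \<bullet> Y = a * n * k - F" and GG: "n * a\<^sup>2 - 2 * a * n * k + F = (norm G)\<^sup>2"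
    using inner_shifted_gram[OF Q, of a] norm_shifted_gram_square[OF Q, of a]
    by (simp_all add: G_def Y_def n_def F_def)
  have "F - a * n * k = - (G \<bullet> Y)" "sqrt (n * a\<^sup>2 - 2 * a * n * k + F) = norm G"
    by (simp_all add: GY GG)
  moreover have "sqrt F = norm Y"
    by (simp add: F_def Y_def)
  ultimately have "(F - a * n * k) / (sqrt (n * a\<^sup>2 - 2 * a * n * k + F) * sqrt F) = - (G \<bullet> Y) / (norm G * norm Y)"
    by (simp only:)
  also have "\<dots> \<le> distF_bar (kpsd_closure k :: (real^'n^'n) set)"
  proof (rule distF_bar_kpsd_closure_ge)
    show "G \<in> kpsd_closure k"
      unfolding G_def Y_def using bound by (rule shifted_gram_in_kpsd_closure)
    show "0 \<le> N \<bullet> Y" if "psd N" for N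
      unfolding Y_def using that by (rule psd_inner_gram_nonneg)
    have "a * n * k < k * n\<^sup>2"
      using \<open>0 < k\<close> \<open>a < n\<close> by (simp add: n_def power2_eq_square)
    also have "\<dots> \<le> F"
      using norm_gram_square_ge[OF Q] by (simp add: F_def n_def)
    finally show "G \<bullet> Y < 0"
      unfolding GY by simp
  qed
  finally show ?thesis .
qed

text \<open>The heart of the estimate is \<open>u\<^sup>2 + r < 3 (1 - u)\<^sup>2\<close>, valid for \<open>u \<le> 0.53\<close> and \<open>r < 1/93\<close>.\<close>

lemma normalized_ratio_ineq:
  fixes w u r :: real
  assumes w: "1 \<le> w" and u: "0 \<le> u" "u \<le> 53/100" and r: "0 < r" "r < 1/93"
  shows "(1 - 93 * r) * (w * (u\<^sup>2 - 2 * u * r + r * w)) < 3 * (1 + 54 * r) * (w - u)\<^sup>2"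
proof -
  have "0 \<le> (u - r)\<^sup>2 + r * (w - r)"
    using w r by (intro add_nonneg_nonneg mult_nonneg_nonneg) auto
  then have "0 \<le> u\<^sup>2 - 2 * u * r + r * w"
    by (simp add: power2_eq_square algebra_simps)
  then have "0 \<le> w * (u\<^sup>2 - 2 * u * r + r * w)"
    using w by simp
  then have "(1 - 93 * r) * (w * (u\<^sup>2 - 2 * u * r + r * w)) \<le> 1 * (w * (u\<^sup>2 - 2 * u * r + r * w))"
    using r by (intro mult_right_mono) auto
  also have "\<dots> \<le> w * (u\<^sup>2 + r * w)"
    unfolding mult_1_left using w u r by (intro mult_left_mono) auto
  also have "\<dots> \<le> w\<^sup>2 * (u\<^sup>2 + r)"
    using mult_right_mono[of w "w\<^sup>2" "u\<^sup>2"] w by (simp add: power2_eq_square algebra_simps)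
  also have "\<dots> < w\<^sup>2 * (3 * (1 - u)\<^sup>2)"
  proof (intro mult_strict_left_mono)
    have "u\<^sup>2 \<le> (53/100)\<^sup>2" "(47/100)\<^sup>2 \<le> (1 - u)\<^sup>2"
      using u by (intro power_mono; simp)+
    then show "u\<^sup>2 + r < 3 * (1 - u)\<^sup>2"
      using r by (simp add: power2_eq_square)
  qed (use w in simp)
  also have "\<dots> = 3 * (w * (1 - u))\<^sup>2"
    by (simp add: power_mult_distrib)
  also have "\<dots> \<le> 3 * (w - u)\<^sup>2"
    using w u mult_left_mono[of 1 w u] by (intro mult_left_mono power_mono) (auto simp: algebra_simps)
  also have "\<dots> \<le> 3 * (1 + 54 * r) * (w - u)\<^sup>2"
    using r by (simp add: mult_le_cancel_right1 algebra_simps)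
  finally show ?thesis .
qed

lemma ratio_lower_bound:
  fixes n k r a F :: real
  assumes n: "0 < n" and k: "k = r * n" and r: "0 < r" "r < 1/93"
    and a: "0 \<le> a" "a \<le> 53/100 * n" and F: "k * n\<^sup>2 \<le> F"
  shows "sqrt (r - 93 * r\<^sup>2) / sqrt (162 * r + 3)
           < (F - a * n * k) / (sqrt (n * a\<^sup>2 - 2 * a * n * k + F) * sqrt F)"
proof -
  define w where "w = F / (k * n\<^sup>2)"
  define u where "u = a / n"
  define X where "X = u\<^sup>2 - 2 * u * r + r * w"
  have w1: "1 \<le> w" and u: "0 \<le> u" "u \<le> 53/100"
    using F a n r by (simp_all add: w_def u_def k field_simps)
  have F_eq: "F = r * n ^ 3 * w" and a_eq: "a = u * n"
    using n r by (simp_all add: w_def u_def k power2_eq_square power3_eq_cube)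
  have "X = (u - r)\<^sup>2 + r * (w - r)"
    by (simp add: X_def power2_eq_square algebra_simps)
  moreover have "0 < r * (w - r)"
    using w1 r by simp
  ultimately have X_pos: "0 < X"
    by (simp add: add_nonneg_pos)
  have D: "n * a\<^sup>2 - 2 * a * n * k + F = n ^ 3 * X" and N: "F - a * n * k = r * n ^ 3 * (w - u)"
    by (simp_all add: F_eq a_eq k X_def power2_eq_square power3_eq_cube algebra_simps)
  have key: "(1 - 93 * r) * (w * X) < 3 * (1 + 54 * r) * (w - u)\<^sup>2"
    unfolding X_def using normalized_ratio_ineq[OF w1 u r] .
  have "(sqrt (r - 93 * r\<^sup>2) / sqrt (162 * r + 3))\<^sup>2 = r * (1 - 93 * r) / (3 * (1 + 54 * r))"
    using r by (simp add: power_divide power2_eq_square algebra_simps)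
  also have "\<dots> < r * (w - u)\<^sup>2 / (w * X)"
    using key r w1 X_pos by (simp add: divide_simps mult_ac)
  also have "\<dots> = ((F - a * n * k) / (sqrt (n * a\<^sup>2 - 2 * a * n * k + F) * sqrt F))\<^sup>2"
  proof -
    have "0 \<le> n ^ 3 * X" "0 \<le> F"
      using n X_pos F_eq r w1 by simp_all
    then have "((F - a * n * k) / (sqrt (n * a\<^sup>2 - 2 * a * n * k + F) * sqrt F))\<^sup>2
        = (r * n ^ 3 * (w - u))\<^sup>2 / (n ^ 3 * X * (r * n ^ 3 * w))"
      unfolding D N by (simp add: power_divide power_mult_distrib F_eq)
    also have "\<dots> = r * (w - u)\<^sup>2 / (w * X)"
      using n r by (simp add: power_mult_distrib power2_eq_square mult_ac)
    finally show ?thesis ..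
  qed
  finally have "(sqrt (r - 93 * r\<^sup>2) / sqrt (162 * r + 3))\<^sup>2
      < ((F - a * n * k) / (sqrt (n * a\<^sup>2 - 2 * a * n * k + F) * sqrt F))\<^sup>2" .
  moreover have "0 \<le> (F - a * n * k) / (sqrt (n * a\<^sup>2 - 2 * a * n * k + F) * sqrt F)"
    unfolding N D using n r w1 u X_pos F_eq by (intro divide_nonneg_nonneg) auto
  ultimately show ?thesis
    by (rule power_less_imp_less_base)
qed

theorem theorem4:
  fixes r :: real and k :: nat
  assumes "r < 1/93"
    and "real k = r * real CARD('n)"
    and "k \<ge> 2"
  shows "distF_bar (kpsd_closure k :: (real^'n^'n) set)
           > sqrt (r - 93 * r^2) / sqrt (162 * r + 3)"
proof -
  define n where "n = real CARD('n)"
  define a where "a = 25/8 * (14 * real k + n / 93 + 1)"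
  have n: "0 < n"
    by (simp add: n_def)
  moreover have "0 < r * n"
    using assms(2,3) by (simp add: n_def)
  ultimately have r: "0 < r"
    by (simp add: zero_less_mult_iff)
  have "93 * real k < n"
    using assms(1,2) n by (simp add: n_def field_simps)
  then have a: "0 \<le> a" "a \<le> 53/100 * n"
    using assms(3) by (simp_all add: a_def)
  obtain Q where Q: "Q \<in> sign_matrices k" and bound: "\<forall>T::'n set. card T = k \<longrightarrow>
      (\<forall>x. (\<Sum>l<k. (\<Sum>i\<in>T. x i * Q (i, l))\<^sup>2) \<le> a * (\<Sum>i\<in>T. (x i)\<^sup>2))"
    using exists_sign_matrix_restricted_bound[of k] assms(3) unfolding a_def n_def by auto
  define F where "F = (norm (gram k Q :: real^'n^'n))\<^sup>2"
  have "real k * n\<^sup>2 \<le> F"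
    using norm_gram_square_ge[OF Q] by (simp add: F_def n_def)
  from ratio_lower_bound[OF n assms(2)[folded n_def] r assms(1) a this]
  have "sqrt (r - 93 * r\<^sup>2) / sqrt (162 * r + 3)
      < (F - a * n * real k) / (sqrt (n * a\<^sup>2 - 2 * a * n * real k + F) * sqrt F)" .
  also have "\<dots> \<le> distF_bar (kpsd_closure k :: (real^'n^'n) set)"
    using distF_bar_kpsd_closure_ge_shifted_gram[OF Q, of a] bound a n assms(3)
    unfolding F_def n_def by auto
  finally show ?thesis .
qed

end
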